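(* Let $X$ be a nonempty $T_0$-space and $Y$ a $T_0$-space. If the space $[X,Y]$ is $S^{\ast}$-well-filtered, then $Y$ is $S^{\ast}$-well-filtered.
   Context: $[X,Y]$ denotes the set $\mathrm{TOP}(X,Y)$ of continuous maps $X\to Y$ endowed with the Isbell topology, generated by the subbasic sets $N(H\leftarrow V)=\{f\mid f^{-1}(V)\in H\}$ where $H$ is a Scott open subset of the complete lattice $\mathcal{O}(X)$ of open sets of $X$ and $V$ is open in $Y$. For a space $Z$, ${\uparrow}$ is taken in the specialization order ($x\le y$ iff $x\in cl\{y\}$); $K(Z)$ is the set of nonempty compact saturated (= upper) subsets; a family in $K(Z)$ is filtered if any two members contain a common member. $Z$ is $S^{\ast}$-well-filtered if for every filtered family $\{K_i\mid i\in I\}\subseteq K(Z)$, every $G\in K(Z)$ and every nonempty open $U$, $\bigcap_{i}K_i\cap G\subseteq U$ implies $K_i\cap G\subseteq U$ for some $i$. *)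

theory Defs
  imports "HOL-Analysis.Analysis"
begin

definition scott_open_opens :: "'a topology \<Rightarrow> 'a set set \<Rightarrow> bool" where
  "scott_open_opens X H \<longleftrightarrow>
     H \<subseteq> {U. openin X U} \<and>
     (\<forall>U V. U \<in> H \<and> openin X V \<and> U \<subseteq> V \<longrightarrow> V \<in> H) \<and>
     (\<forall>D. D \<subseteq> {U. openin X U} \<and> D \<noteq> {} \<and>
          (\<forall>A\<in>D. \<forall>B\<in>D. \<exists>C\<in>D. A \<subseteq> C \<and> B \<subseteq> C) \<and> \<Union>D \<in> H
          \<longrightarrow> (\<exists>U\<in>D. U \<in> H))"

(* TOP(X,Y): continuous maps X -> Y, represented extensionally
   (value undefined outside topspace X) *)
definition cont_maps :: "'a topology \<Rightarrow> 'b topology \<Rightarrow> ('a \<Rightarrow> 'b) set" where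
  "cont_maps X Y = {f. continuous_map X Y f \<and> f \<in> extensional (topspace X)}"

definition isbell_subbasis :: "'a topology \<Rightarrow> 'b topology \<Rightarrow> ('a \<Rightarrow> 'b) set set" where
  "isbell_subbasis X Y =
     {{f \<in> cont_maps X Y. {x \<in> topspace X. f x \<in> V} \<in> H} | H V.
        scott_open_opens X H \<and> openin Y V}"

(* [X,Y]: TOP(X,Y) with the Isbell topology *)
definition isbell :: "'a topology \<Rightarrow> 'b topology \<Rightarrow> ('a \<Rightarrow> 'b) topology" where
  "isbell X Y = subtopology (topology_generated_by (isbell_subbasis X Y)) (cont_maps X Y)"

(* saturated = upper set in the specialization order (x \<le> y iff x \<in> cl{y}) *)
definition saturated :: "'a topology \<Rightarrow> 'a set \<Rightarrow> bool" where
  "saturated Z K \<longleftrightarrow> K \<subseteq> topspace Z \<and>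
     (\<forall>x\<in>K. \<forall>y\<in>topspace Z. x \<in> Z closure_of {y} \<longrightarrow> y \<in> K)"

definition KZ :: "'a topology \<Rightarrow> 'a set set" where
  "KZ Z = {K. K \<noteq> {} \<and> compactin Z K \<and> saturated Z K}"

definition filtered_family :: "'a set set \<Rightarrow> bool" where
  "filtered_family \<K> \<longleftrightarrow> \<K> \<noteq> {} \<and> (\<forall>A\<in>\<K>. \<forall>B\<in>\<K>. \<exists>C\<in>\<K>. C \<subseteq> A \<inter> B)"

definition S_star_well_filtered :: "'a topology \<Rightarrow> bool" where
  "S_star_well_filtered Z \<longleftrightarrow>
     (\<forall>\<K> G U. \<K> \<subseteq> KZ Z \<and> filtered_family \<K> \<and> G \<in> KZ Z \<and>
        openin Z U \<and> U \<noteq> {} \<and> \<Inter>\<K> \<inter> G \<subseteq> U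
        \<longrightarrow> (\<exists>K\<in>\<K>. K \<inter> G \<subseteq> U))"

end

theory Submission
  imports Defs
begin

text \<open>Fix a point \<open>x\<^sub>0\<close> of \<open>X\<close>. Sending \<open>y\<close> to the constant map with value \<open>y\<close> and evaluating at
\<open>x\<^sub>0\<close> are continuous maps \<open>Y \<rightarrow> [X,Y] \<rightarrow> Y\<close> composing to the identity, so \<open>Y\<close> is a retract
of \<open>[X,Y]\<close>. \<open>S\<^sup>*\<close>-well-filteredness passes to retracts: a filtered family \<open>K\<^sub>i\<close>, \<open>G\<close> and \<open>U\<close> in \<open>Y\<close>
are carried to the saturations of the images of \<open>K\<^sub>i\<close> and \<open>G\<close> under the section and to the
preimage of \<open>U\<close> under the retraction; since continuous maps preserve the specialization
order, the retraction maps these saturations back into \<open>K\<^sub>i\<close> and \<open>G\<close>.\<close>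

definition saturation :: "'a topology \<Rightarrow> 'a set \<Rightarrow> 'a set" where
  "saturation Z A = {z \<in> topspace Z. \<exists>a\<in>A. a \<in> Z closure_of {z}}"

lemma in_closure_of_singleton_openin:
  "a \<in> Z closure_of {z} \<longleftrightarrow> a \<in> topspace Z \<and> (\<forall>W. openin Z W \<and> a \<in> W \<longrightarrow> z \<in> W)"
  by (auto simp: closure_of_def)

lemma saturation_superset: "A \<subseteq> topspace Z \<Longrightarrow> A \<subseteq> saturation Z A"
  unfolding saturation_def in_closure_of_singleton_openin by blast

lemma saturation_mono: "A \<subseteq> B \<Longrightarrow> saturation Z A \<subseteq> saturation Z B"
  unfolding saturation_def by blast

lemma saturated_saturation: "saturated Z (saturation Z A)"
  unfolding saturated_def saturation_def in_closure_of_singleton_openin by blast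

lemma compactin_saturation:
  assumes "compactin Z A"
  shows "compactin Z (saturation Z A)"
  unfolding compactin_def
proof (intro conjI allI impI)
  show "saturation Z A \<subseteq> topspace Z"
    unfolding saturation_def by blast
  fix \<U> assume \<U>: "(\<forall>U\<in>\<U>. openin Z U) \<and> saturation Z A \<subseteq> \<Union>\<U>"
  then have "A \<subseteq> \<Union>\<U>"
    using saturation_superset[OF compactin_subset_topspace[OF assms]] by blast
  then obtain \<F> where \<F>: "finite \<F>" "\<F> \<subseteq> \<U>" "A \<subseteq> \<Union>\<F>"
    using assms \<U> unfolding compactin_def by blast
  have "saturation Z A \<subseteq> \<Union>\<F>"
  proof
    fix z assume "z \<in> saturation Z A"
    then obtain a W where "a \<in> Z closure_of {z}" "a \<in> W" "W \<in> \<F>"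
      using \<F>(3) unfolding saturation_def by blast
    \<comment> \<open>open sets are upper sets in the specialization order\<close>
    then show "z \<in> \<Union>\<F>"
      using \<F>(2) \<U> unfolding in_closure_of_singleton_openin by blast
  qed
  with \<F> show "\<exists>\<F>. finite \<F> \<and> \<F> \<subseteq> \<U> \<and> saturation Z A \<subseteq> \<Union>\<F>"
    by blast
qed

lemma saturation_in_KZ:
  assumes "compactin Z A" and "A \<noteq> {}"
  shows "saturation Z A \<in> KZ Z"
proof -
  have "A \<subseteq> saturation Z A"
    by (rule saturation_superset[OF compactin_subset_topspace[OF assms(1)]])
  then show ?thesis
    using assms(2) compactin_saturation[OF assms(1)] saturated_saturation
    unfolding KZ_def by blast
qed

lemma KZ_subset_topspace: "K \<in> KZ Z \<Longrightarrow> K \<subseteq> topspace Z"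
  unfolding KZ_def using compactin_subset_topspace by blast

lemma saturation_image_in_KZ:
  assumes "continuous_map Y Z s" and "K \<in> KZ Y"
  shows "saturation Z (s ` K) \<in> KZ Z"
  using assms saturation_in_KZ image_compactin unfolding KZ_def by blast

lemma saturation_subset_preimage:
  assumes "continuous_map Z Y r" and "saturated Y K" and "r ` A \<subseteq> K"
  shows "saturation Z A \<subseteq> {z \<in> topspace Z. r z \<in> K}"
proof
  fix z assume "z \<in> saturation Z A"
  then obtain a where z: "z \<in> topspace Z" and a: "a \<in> A" "a \<in> Z closure_of {z}"
    unfolding saturation_def by blast
  have "r a \<in> Y closure_of {r z}"
    using continuous_map_image_closure_subset[OF assms(1), of "{z}"] a(2) by auto
  moreover have "r z \<in> topspace Y"
    using continuous_map_image_subset_topspace[OF assms(1)] z by blast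
  moreover have "r a \<in> K"
    using a(1) assms(3) by blast
  ultimately have "r z \<in> K"
    using assms(2) unfolding saturated_def by blast
  with z show "z \<in> {z \<in> topspace Z. r z \<in> K}"
    by blast
qed

lemma filtered_family_image_mono:
  assumes "filtered_family \<K>" and mono: "\<And>A B. A \<subseteq> B \<Longrightarrow> F A \<subseteq> F B"
  shows "filtered_family (F ` \<K>)"
  unfolding filtered_family_def
proof (intro conjI ballI)
  show "F ` \<K> \<noteq> {}"
    using assms(1) unfolding filtered_family_def by blast
  fix P Q assume "P \<in> F ` \<K>" "Q \<in> F ` \<K>"
  then obtain A B where AB: "A \<in> \<K>" "B \<in> \<K>" "P = F A" "Q = F B"
    by blast
  then obtain C where C: "C \<in> \<K>" "C \<subseteq> A" "C \<subseteq> B"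
    using assms(1) unfolding filtered_family_def by blast
  then have "F C \<subseteq> P \<inter> Q"
    using AB(3,4) mono by blast
  with C(1) show "\<exists>R\<in>F ` \<K>. R \<subseteq> P \<inter> Q"
    by blast
qed

lemma S_star_well_filteredD:
  assumes "S_star_well_filtered Z" and "\<K> \<subseteq> KZ Z" and "filtered_family \<K>"
    and "G \<in> KZ Z" and "openin Z U" and "U \<noteq> {}" and "\<Inter>\<K> \<inter> G \<subseteq> U"
  shows "\<exists>K\<in>\<K>. K \<inter> G \<subseteq> U"
  using assms unfolding S_star_well_filtered_def by blast

lemma S_star_well_filtered_retract:
  assumes s: "continuous_map Y Z s" and r: "continuous_map Z Y r"
    and rs: "\<And>y. y \<in> topspace Y \<Longrightarrow> r (s y) = y"
    and Z: "S_star_well_filtered Z"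
  shows "S_star_well_filtered Y"
  unfolding S_star_well_filtered_def
proof (intro allI impI, elim conjE)
  fix \<K> G U
  assume \<K>: "\<K> \<subseteq> KZ Y" "filtered_family \<K>" and G: "G \<in> KZ Y"
    and U: "openin Y U" "U \<noteq> {}" and cap: "\<Inter>\<K> \<inter> G \<subseteq> U"
  define lift where "lift K = saturation Z (s ` K)" for K
  have lift_KZ: "lift K \<in> KZ Z" if "K \<in> KZ Y" for K
    unfolding lift_def using saturation_image_in_KZ[OF s that] .
  have s_lift: "s y \<in> lift K" if "y \<in> K" "K \<in> KZ Y" for y K
  proof -
    have "s ` K \<subseteq> topspace Z"
      using KZ_subset_topspace[OF that(2)] continuous_map_image_subset_topspace[OF s] by blast
    then show ?thesis
      unfolding lift_def using saturation_superset that(1) by blast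
  qed
  have r_lift: "r z \<in> K" if "z \<in> lift K" "K \<in> KZ Y" for z K
  proof -
    have "r ` s ` K \<subseteq> K"
      using rs KZ_subset_topspace[OF that(2)] by auto
    then show ?thesis
      using saturation_subset_preimage[OF r] that unfolding KZ_def lift_def by blast
  qed
  let ?U = "{z \<in> topspace Z. r z \<in> U}"
  have "lift ` \<K> \<subseteq> KZ Z"
    using \<K>(1) lift_KZ by blast
  moreover have "filtered_family (lift ` \<K>)"
    using filtered_family_image_mono[OF \<K>(2)] unfolding lift_def
    by (meson image_mono saturation_mono)
  moreover have "lift G \<in> KZ Z"
    using G lift_KZ by blast
  moreover have "openin Z ?U"
    using r U(1) by (simp add: continuous_map_def)
  moreover have "?U \<noteq> {}"
    using U openin_subset[OF U(1)] rs continuous_map_image_subset_topspace[OF s] by force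
  moreover have "\<Inter>(lift ` \<K>) \<inter> lift G \<subseteq> ?U"
  proof
    fix z assume z: "z \<in> \<Inter>(lift ` \<K>) \<inter> lift G"
    then have "z \<in> topspace Z"
      unfolding lift_def saturation_def by blast
    moreover have "r z \<in> \<Inter>\<K> \<inter> G"
      using z r_lift \<K>(1) G by blast
    ultimately show "z \<in> ?U"
      using cap by blast
  qed
  ultimately have "\<exists>K'\<in>lift ` \<K>. K' \<inter> lift G \<subseteq> ?U"
    by (rule S_star_well_filteredD[OF Z])
  then obtain K where K: "K \<in> \<K>" "lift K \<inter> lift G \<subseteq> ?U"
    by blast
  have "K \<inter> G \<subseteq> U"
  proof
    fix y assume "y \<in> K \<inter> G"
    then have "s y \<in> ?U"
      using K \<K>(1) G s_lift by blast
    then show "y \<in> U"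
      using rs \<open>y \<in> K \<inter> G\<close> KZ_subset_topspace[OF G] by auto
  qed
  with K(1) show "\<exists>K\<in>\<K>. K \<inter> G \<subseteq> U" by blast
qed

lemma scott_open_opens_all: "scott_open_opens X {U. openin X U}"
  unfolding scott_open_opens_def by auto

lemma scott_open_opens_neighbourhoods: "scott_open_opens X {U. openin X U \<and> x \<in> U}"
  unfolding scott_open_opens_def by auto

lemma isbell_subbasisI:
  assumes "scott_open_opens X H" and "openin Y V"
  shows "{f \<in> cont_maps X Y. {x \<in> topspace X. f x \<in> V} \<in> H} \<in> isbell_subbasis X Y"
  using assms unfolding isbell_subbasis_def by blast

lemma cont_maps_subset_Union_isbell_subbasis: "cont_maps X Y \<subseteq> \<Union>(isbell_subbasis X Y)"
proof -
  have "{f \<in> cont_maps X Y. {x \<in> topspace X. f x \<in> topspace Y} \<in> {U. openin X U}} = cont_maps X Y"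
    unfolding cont_maps_def continuous_map_def by blast
  moreover have "{f \<in> cont_maps X Y. {x \<in> topspace X. f x \<in> topspace Y} \<in> {U. openin X U}}
      \<in> isbell_subbasis X Y"
    by (rule isbell_subbasisI[OF scott_open_opens_all openin_topspace])
  ultimately show ?thesis
    by (metis Union_upper)
qed

lemma topspace_isbell: "topspace (isbell X Y) = cont_maps X Y"
  unfolding isbell_def topspace_subtopology topology_generated_by_topspace
  using cont_maps_subset_Union_isbell_subbasis by blast

lemma openin_isbell_subbasis:
  assumes "S \<in> isbell_subbasis X Y"
  shows "openin (isbell X Y) S"
proof -
  have "S = S \<inter> cont_maps X Y"
    using assms unfolding isbell_subbasis_def by blast
  then show ?thesis
    unfolding isbell_def openin_subtopology using topology_generated_by_Basis[OF assms] by blast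
qed

lemma continuous_map_eval_isbell:
  assumes "x \<in> topspace X"
  shows "continuous_map (isbell X Y) Y (\<lambda>f. f x)"
  unfolding continuous_map_def topspace_isbell
proof (intro conjI allI impI)
  show "(\<lambda>f. f x) \<in> cont_maps X Y \<rightarrow> topspace Y"
    using assms unfolding cont_maps_def continuous_map_def by blast
  fix V assume V: "openin Y V"
  have "{f \<in> cont_maps X Y. f x \<in> V}
      = {f \<in> cont_maps X Y. {x' \<in> topspace X. f x' \<in> V} \<in> {U. openin X U \<and> x \<in> U}}"
    using assms V unfolding cont_maps_def continuous_map_def by blast
  also have "openin (isbell X Y) \<dots>"
    by (rule openin_isbell_subbasis[OF isbell_subbasisI[OF scott_open_opens_neighbourhoods V]])
  finally show "openin (isbell X Y) {f \<in> cont_maps X Y. f x \<in> V}" .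
qed

lemma continuous_map_const_isbell:
  "continuous_map Y (isbell X Y) (\<lambda>y. \<lambda>x\<in>topspace X. y)"
proof -
  let ?c = "\<lambda>y. \<lambda>x\<in>topspace X. y"
  have c: "?c y \<in> cont_maps X Y" if "y \<in> topspace Y" for y
    using that unfolding cont_maps_def
    by (auto intro: continuous_map_eq[OF continuous_map_const[THEN iffD2]])
  have "continuous_map Y (topology_generated_by (isbell_subbasis X Y)) ?c"
  proof (rule continuous_on_generated_topo)
    fix S assume "S \<in> isbell_subbasis X Y"
    then obtain H V where H: "scott_open_opens X H" and V: "openin Y V"
      and S: "S = {f \<in> cont_maps X Y. {x \<in> topspace X. f x \<in> V} \<in> H}"
      unfolding isbell_subbasis_def by blast
    have "{x \<in> topspace X. ?c y x \<in> V} = (if y \<in> V then topspace X else {})" for y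
      by auto
    then have pre: "?c -` S \<inter> topspace Y = {y \<in> topspace Y. (if y \<in> V then topspace X else {}) \<in> H}"
      unfolding S using c by (auto simp del: restrict_apply)
    \<comment> \<open>\<open>H\<close> is an upper set of opens, so the preimage is \<open>Y\<close>, \<open>V\<close> or empty\<close>
    consider "{} \<in> H" | "{} \<notin> H" "topspace X \<in> H" | "{} \<notin> H" "topspace X \<notin> H"
      by blast
    then show "openin Y (?c -` S \<inter> topspace Y)"
    proof cases
      case 1
      then have "topspace X \<in> H"
        using H unfolding scott_open_opens_def by blast
      with 1 have "?c -` S \<inter> topspace Y = topspace Y"
        unfolding pre by auto
      then show ?thesis
        by simp
    next
      case 2
      then have "?c -` S \<inter> topspace Y = V"
        unfolding pre using openin_subset[OF V] by auto
      with V show ?thesis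
        by simp
    next
      case 3
      then show ?thesis
        unfolding pre by (simp add: if_distrib)
    qed
  next
    show "?c ` topspace Y \<subseteq> \<Union>(isbell_subbasis X Y)"
      using c cont_maps_subset_Union_isbell_subbasis by blast
  qed
  then show ?thesis
    unfolding isbell_def continuous_map_in_subtopology using c by blast
qed

theorem mainTheorem18:
  fixes X :: "'a topology" and Y :: "'b topology"
  assumes "t0_space X" and "topspace X \<noteq> {}" and "t0_space Y"
    and "S_star_well_filtered (isbell X Y)"
  shows "S_star_well_filtered Y"
proof -
  obtain x0 where x0: "x0 \<in> topspace X"
    using assms(2) by blast
  show ?thesis
    by (rule S_star_well_filtered_retract[OF continuous_map_const_isbell
          continuous_map_eval_isbell[OF x0] _ assms(4)]) (simp add: x0)
qed

end
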